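(* Consider the closed-loop system $\dot p_i=\mathrm{sat}(v_i^{\mathrm{ms}}(\mathbf p)+v_i^{\mathrm{cv}}(\mathbf p))$, $i=1,\dots,n$, defined in the context (with true masses $P_k(\mathbf p)$), and let $S\subset\mathbb{R}^d$ (the desired shape) be a closed convex set containing all sample points $q_1,\dots,q_m$. Then for every initial state $\mathbf p(t_0)\in\mathbb{R}^{dn}$ and every $i\in\{1,\dots,n\}$, $\operatorname{dist}(p_i(t),S)\to0$ as $t\to\infty$; i.e., all robots converge to the desired shape.
   Context: Setting: $n\ge2$ robots in $\mathbb{R}^d$, positions $p_i\in\mathbb{R}^d$, configuration $\mathbf p=[p_1^\top,\dots,p_n^\top]^\top\in\mathbb{R}^{dn}$; fixed sample points $q_1,\dots,q_m\in\mathbb{R}^d$; constants $\beta>0$, $\sigma_1>0$, $\sigma_2>0$, $\varepsilon\in(0,1)$, $r_{\mathrm{avoid}}>0$, $v_{\max}>0$. Mass: $P_k(\mathbf p)=\frac1n\sum_{i=1}^n e^{-\beta\|q_k-p_i\|^2}$. Meanshift command: $v_i^{\mathrm{ms}}(\mathbf p)=\dfrac{\frac{\sigma_1}{m}\sum_{k=1}^m P_k(\mathbf p)^{-1}e^{-\beta\|q_k-p_i\|^2}(q_k-p_i)}{\sum_{k=1}^m P_k(\mathbf p)^{-1}e^{-\beta\|q_k-p_i\|^2}}$. Repulsive term: $\tilde v_i^{\mathrm{cv}}=\sigma_2\sum_{j\ne i,\ \|p_i-p_j\|\le r_{\mathrm{avoid}}}\frac{r_{\mathrm{avoid}}-\|p_i-p_j\|}{\|p_i-p_j\|+\varepsilon}(p_i-p_j)$.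 With $\varphi=\min\{\|v_i^{\mathrm{ms}}\|^2/\varepsilon,1\}$, the gain is $\kappa_2=\varphi$ if $(v_i^{\mathrm{ms}})^\top\tilde v_i^{\mathrm{cv}}\ge0$ and $\kappa_2=\varphi\min\{-(1-\varepsilon)\|v_i^{\mathrm{ms}}\|^2/((v_i^{\mathrm{ms}})^\top\tilde v_i^{\mathrm{cv}}),1\}$ if $(v_i^{\mathrm{ms}})^\top\tilde v_i^{\mathrm{cv}}<0$; collision-avoidance command $v_i^{\mathrm{cv}}=\kappa_2\tilde v_i^{\mathrm{cv}}$. Saturation: $\mathrm{sat}(z)=v_{\max}z/\|z\|$ if $\|z\|>v_{\max}$, and $\mathrm{sat}(z)=z$ otherwise. *)

theory Defs
  imports "HOL-Analysis.Analysis"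
begin

text \<open>Robots are indexed by 0..n-1, sample points by 0..m-1.
  A configuration is a map p :: nat \<Rightarrow> 'a (only values at i < n matter),
  where 'a is the ambient Euclidean space R^d.\<close>

definition mass :: "real \<Rightarrow> nat \<Rightarrow> (nat \<Rightarrow> 'a::euclidean_space) \<Rightarrow> 'a \<Rightarrow> real" where
  "mass \<beta> n p qk = (1 / real n) * (\<Sum>i<n. exp (- \<beta> * (norm (qk - p i))\<^sup>2))"

definition v_ms :: "real \<Rightarrow> real \<Rightarrow> nat \<Rightarrow> nat \<Rightarrow> (nat \<Rightarrow> 'a::euclidean_space)
    \<Rightarrow> (nat \<Rightarrow> 'a) \<Rightarrow> nat \<Rightarrow> 'a" where
  "v_ms \<beta> \<sigma>1 n m q p i =
     (1 / (\<Sum>k<m. inverse (mass \<beta> n p (q k)) * exp (- \<beta> * (norm (q k - p i))\<^sup>2))) *\<^sub>R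
     ((\<sigma>1 / real m) *\<^sub>R
       (\<Sum>k<m. (inverse (mass \<beta> n p (q k)) * exp (- \<beta> * (norm (q k - p i))\<^sup>2)) *\<^sub>R (q k - p i)))"

definition v_cv_tilde :: "real \<Rightarrow> real \<Rightarrow> real \<Rightarrow> nat \<Rightarrow> (nat \<Rightarrow> 'a::euclidean_space) \<Rightarrow> nat \<Rightarrow> 'a" where
  "v_cv_tilde \<sigma>2 \<epsilon> r_avoid n p i =
     \<sigma>2 *\<^sub>R (\<Sum>j\<in>{j. j < n \<and> j \<noteq> i \<and> norm (p i - p j) \<le> r_avoid}.
        ((r_avoid - norm (p i - p j)) / (norm (p i - p j) + \<epsilon>)) *\<^sub>R (p i - p j))"

definition kappa2 :: "real \<Rightarrow> 'a::euclidean_space \<Rightarrow> 'a \<Rightarrow> real" where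
  "kappa2 \<epsilon> vms vt =
     (let \<phi> = min ((norm vms)\<^sup>2 / \<epsilon>) 1 in
      if vms \<bullet> vt \<ge> 0 then \<phi>
      else \<phi> * min (- (1 - \<epsilon>) * (norm vms)\<^sup>2 / (vms \<bullet> vt)) 1)"

definition v_cv :: "real \<Rightarrow> real \<Rightarrow> real \<Rightarrow> real \<Rightarrow> real \<Rightarrow> nat \<Rightarrow> nat \<Rightarrow> (nat \<Rightarrow> 'a::euclidean_space)
    \<Rightarrow> (nat \<Rightarrow> 'a) \<Rightarrow> nat \<Rightarrow> 'a" where
  "v_cv \<beta> \<sigma>1 \<sigma>2 \<epsilon> r_avoid n m q p i =
     kappa2 \<epsilon> (v_ms \<beta> \<sigma>1 n m q p i) (v_cv_tilde \<sigma>2 \<epsilon> r_avoid n p i) *\<^sub>R v_cv_tilde \<sigma>2 \<epsilon> r_avoid n p i"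

definition sat :: "real \<Rightarrow> 'a::euclidean_space \<Rightarrow> 'a" where
  "sat vmax z = (if norm z > vmax then (vmax / norm z) *\<^sub>R z else z)"

definition closed_loop :: "real \<Rightarrow> real \<Rightarrow> real \<Rightarrow> real \<Rightarrow> real \<Rightarrow> real \<Rightarrow> nat \<Rightarrow> nat
    \<Rightarrow> (nat \<Rightarrow> 'a::euclidean_space) \<Rightarrow> (nat \<Rightarrow> 'a) \<Rightarrow> nat \<Rightarrow> 'a" where
  "closed_loop \<beta> \<sigma>1 \<sigma>2 \<epsilon> r_avoid vmax n m q p i =
     sat vmax (v_ms \<beta> \<sigma>1 n m q p i + v_cv \<beta> \<sigma>1 \<sigma>2 \<epsilon> r_avoid n m q p i)"

end

theory Submission
  imports Defs
begin

(* The meanshift command of robot i points from p_i towards c_i, the mean of the samples q_k under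
   the weights P_k^-1 exp(-beta |q_k - p_i|^2); as S is convex, c_i lies in S, so
   |v_i^ms| >= (sigma1/m) dist(p_i, S). The gain kappa2 keeps
   (v_i^ms)^T (v_i^ms + v_i^cv) >= epsilon |v_i^ms|^2, and saturation rescales the command by a
   factor that is bounded below on bounded sets. Far from the origin the command points inwards,
   so every robot stays in a ball. Along trajectories V = - sum_k ln P_k has derivative
   -(2 beta/n) sum_j (sum_k w_jk (q_k - p_j)) . p_j', a sum of nonpositive terms, the i-th of which
   is at most -eta dist(p_i, S)^2 on that ball. As V >= 0 and dist(p_i(t), S) is v_max-Lipschitz
   in t, a Barbalat-type argument gives dist(p_i(t), S) -> 0. *)

section \<open>Convergence by dissipation on a half-line\<close>

lemma lipschitz_on_infdist: "1-lipschitz_on U (\<lambda>x. infdist x A)"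
  by (rule lipschitz_onI) (use infdist_triangle_abs in \<open>auto simp: dist_real_def\<close>)

lemma lipschitz_on_vector_derivative_bound:
  fixes f :: "real \<Rightarrow> 'a::real_normed_vector"
  assumes "convex T"
    and f': "\<And>t. t \<in> T \<Longrightarrow> (f has_vector_derivative f' t) (at t within T)"
    and bound: "\<And>t. t \<in> T \<Longrightarrow> norm (f' t) \<le> B"
    and "0 \<le> B"
  shows "B-lipschitz_on T f"
proof (rule lipschitz_onI)
  fix s t assume "s \<in> T" "t \<in> T"
  have "norm (f s - f t) \<le> B * norm (s - t)"
  proof (rule differentiable_bound[where f'="\<lambda>t h. h *\<^sub>R f' t"])
    fix z assume "z \<in> T"
    then show "(f has_derivative (\<lambda>h. h *\<^sub>R f' z)) (at z within T)"
      using f' by (simp add: has_vector_derivative_def)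
    show "onorm (\<lambda>h. h *\<^sub>R f' z) \<le> B"
      using bound[OF \<open>z \<in> T\<close>] onorm_scaleR_left[OF bounded_linear_ident, of "f' z"]
      by (simp add: onorm_id)
  qed (use assms \<open>s \<in> T\<close> \<open>t \<in> T\<close> in auto)
  then show "dist (f s) (f t) \<le> B * dist s t"
    by (simp add: dist_norm)
qed (rule \<open>0 \<le> B\<close>)

lemma norm_le_if_inner_derivative_nonpos:
  fixes y :: "real \<Rightarrow> 'a::real_inner"
  assumes "s \<le> b"
    and y': "\<And>t. s \<le> t \<Longrightarrow> t \<le> b \<Longrightarrow> (y has_vector_derivative y' t) (at t within {s..b})"
    and inward: "\<And>t. s < t \<Longrightarrow> t < b \<Longrightarrow> y t \<bullet> y' t \<le> 0"
  shows "norm (y b) \<le> norm (y s)"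
proof (cases "s = b")
  case False
  with \<open>s \<le> b\<close> have "s < b"
    by simp
  have "((\<lambda>t. y t \<bullet> y t) has_derivative (\<lambda>h. h * (2 * (y t \<bullet> y' t)))) (at t within {s..b})"
    if "s \<le> t" "t \<le> b" for t
    using y'[OF that] unfolding has_vector_derivative_def
    by (auto intro!: derivative_eq_intros simp: inner_commute algebra_simps)
  from mvt_simple[OF \<open>s < b\<close> this] obtain \<xi> where \<xi>: "\<xi> \<in> {s<..<b}"
      "y b \<bullet> y b - y s \<bullet> y s = (b - s) * (2 * (y \<xi> \<bullet> y' \<xi>))"
    by blast
  have "(b - s) * (2 * (y \<xi> \<bullet> y' \<xi>)) \<le> 0"
    using inward[of \<xi>] \<xi>(1) \<open>s < b\<close> by (intro mult_nonneg_nonpos) auto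
  then have "(norm (y b))\<^sup>2 \<le> (norm (y s))\<^sup>2"
    using \<xi>(2) by (simp add: power2_norm_eq_inner)
  then show ?thesis
    by (rule power2_le_imp_le) simp
qed simp

lemma norm_le_max_if_inner_derivative_nonpos:
  fixes y :: "real \<Rightarrow> 'a::real_inner"
  assumes y': "\<And>t. t0 \<le> t \<Longrightarrow> (y has_vector_derivative y' t) (at t within {t0..})"
    and inward: "\<And>t. t0 \<le> t \<Longrightarrow> R < norm (y t) \<Longrightarrow> y t \<bullet> y' t \<le> 0"
    and "t0 \<le> b"
  shows "norm (y b) \<le> max (norm (y t0)) R"
proof (rule ccontr)
  define M where "M = max (norm (y t0)) R"
  assume "\<not> ?thesis"
  then have "M < norm (y b)"
    by (simp add: M_def not_le)
  define A where "A = {t0..b} \<inter> (\<lambda>t. norm (y t)) -` {..M}"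
  have "continuous_on {t0..} y"
    using y' by (auto intro: has_vector_derivative_continuous simp: continuous_on_eq_continuous_within)
  then have "continuous_on {t0..b} y"
    by (rule continuous_on_subset) auto
  then have "closed A"
    unfolding A_def by (intro continuous_closed_preimage continuous_on_norm) auto
  moreover have "t0 \<in> A" "bdd_above A"
    using \<open>t0 \<le> b\<close> by (auto simp: A_def M_def intro: bdd_aboveI[of _ b])
  ultimately have "Sup A \<in> A"
    using closed_contains_Sup by blast
  define s where "s = Sup A"
  have s: "t0 \<le> s" "s < b" "norm (y s) \<le> M"
    using \<open>Sup A \<in> A\<close> \<open>M < norm (y b)\<close> by (auto simp: s_def A_def order.order_iff_strict)
  have far: "M < norm (y t)" if "s < t" "t \<le> b" for t
    using cSup_upper[OF _ \<open>bdd_above A\<close>, of t] that s by (fastforce simp: A_def s_def)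
  have "norm (y b) \<le> norm (y s)"
  proof (rule norm_le_if_inner_derivative_nonpos)
    show "(y has_vector_derivative y' t) (at t within {s..b})" if "s \<le> t" "t \<le> b" for t
      using y'[of t] that s by (auto intro: has_vector_derivative_within_subset)
    show "y t \<bullet> y' t \<le> 0" if "s < t" "t < b" for t
      using inward[of t] far[of t] that s by (auto simp: M_def)
  qed (use s in auto)
  with s(3) \<open>M < norm (y b)\<close> show False
    by linarith
qed

lemma mvt_atLeast:
  fixes V V' :: "real \<Rightarrow> real"
  assumes V': "\<And>t. t0 \<le> t \<Longrightarrow> (V has_real_derivative V' t) (at t within {t0..})"
    and "t0 \<le> s" "s \<le> t"
  shows "\<exists>\<xi>\<in>{s..t}. V t - V s = V' \<xi> * (t - s)"
proof -
  have "(V has_derivative (*) (V' \<xi>)) (at \<xi> within {s..t})" if "s \<le> \<xi>" "\<xi> \<le> t" for \<xi>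
    using V'[of \<xi>] that \<open>t0 \<le> s\<close> has_field_derivative_subset[of V _ \<xi> "{t0..}" "{s..t}"]
    by (auto simp: has_field_derivative_def)
  from mvt_very_simple[OF \<open>s \<le> t\<close> this] show ?thesis
    by blast
qed

lemma antimono_if_derivative_nonpos_atLeast:
  fixes V V' :: "real \<Rightarrow> real"
  assumes V': "\<And>t. t0 \<le> t \<Longrightarrow> (V has_real_derivative V' t) (at t within {t0..})"
    and nonpos: "\<And>t. t0 \<le> t \<Longrightarrow> V' t \<le> 0"
    and "t0 \<le> s" "s \<le> t"
  shows "V t \<le> V s"
proof -
  obtain \<xi> where \<xi>: "\<xi> \<in> {s..t}" "V t - V s = V' \<xi> * (t - s)"
    using mvt_atLeast[OF V' \<open>t0 \<le> s\<close> \<open>s \<le> t\<close>] by blast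
  have "V' \<xi> * (t - s) \<le> 0"
    using nonpos[of \<xi>] \<xi>(1) \<open>t0 \<le> s\<close> \<open>s \<le> t\<close> by (intro mult_nonpos_nonneg) auto
  with \<xi>(2) show ?thesis
    by simp
qed

lemma eventually_less_if_recurrent_drop:
  fixes V f :: "real \<Rightarrow> real"
  assumes antimono: "\<And>s t. t0 \<le> s \<Longrightarrow> s \<le> t \<Longrightarrow> V t \<le> V s"
    and bounded: "\<And>t. t0 \<le> t \<Longrightarrow> c \<le> V t"
    and drop: "\<And>t. t0 \<le> t \<Longrightarrow> e \<le> f t \<Longrightarrow> V (t + h) \<le> V t - \<delta>"
    and "0 < \<delta>" "0 \<le> h"
  shows "eventually (\<lambda>t. f t < e) at_top"
proof (rule ccontr)
  assume "\<not> ?thesis"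
  then have recurrent: "\<exists>t\<ge>T. e \<le> f t" for T
    by (auto simp: eventually_at_top_linorder not_less)
  have descent: "\<exists>T\<ge>t0. V T \<le> V t0 - real k * \<delta>" for k :: nat
  proof (induction k)
    case 0
    then show ?case by auto
  next
    case (Suc k)
    then obtain T where T: "t0 \<le> T" "V T \<le> V t0 - real k * \<delta>"
      by blast
    obtain t where t: "T \<le> t" "e \<le> f t"
      using recurrent by blast
    have "V (t + h) \<le> V t0 - real (Suc k) * \<delta>"
      using drop[of t] antimono[of T t] T t by (auto simp: algebra_simps)
    moreover have "t0 \<le> t + h"
      using T t \<open>0 \<le> h\<close> by linarith
    ultimately show ?case
      by blast
  qed
  obtain k :: nat where "V t0 - c < real k * \<delta>"
    using reals_Archimedean3[OF \<open>0 < \<delta>\<close>] by blast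
  moreover obtain T where "t0 \<le> T" "V T \<le> V t0 - real k * \<delta>"
    using descent by blast
  ultimately show False
    using bounded[of T] by linarith
qed

lemma tendsto_zero_if_dissipative:
  fixes V V' d :: "real \<Rightarrow> real"
  assumes V': "\<And>t. t0 \<le> t \<Longrightarrow> (V has_real_derivative V' t) (at t within {t0..})"
    and dissipation: "\<And>t. t0 \<le> t \<Longrightarrow> V' t \<le> - \<eta> * (d t)\<^sup>2"
    and "0 < \<eta>"
    and bounded: "\<And>t. t0 \<le> t \<Longrightarrow> c \<le> V t"
    and lipschitz: "L-lipschitz_on {t0..} d"
  shows "(d \<longlongrightarrow> 0) at_top"
proof -
  have antimono: "V t \<le> V s" if "t0 \<le> s" "s \<le> t" for s t
  proof (rule antimono_if_derivative_nonpos_atLeast[OF V' _ that])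
    fix t assume "t0 \<le> t"
    have "0 \<le> \<eta> * (d t)\<^sup>2"
      using \<open>0 < \<eta>\<close> by simp
    with dissipation[OF \<open>t0 \<le> t\<close>] show "V' t \<le> 0"
      by linarith
  qed
  have "eventually (\<lambda>t. \<bar>d t\<bar> < e) at_top" if "0 < e" for e
  proof -
    have "0 \<le> L"
      using lipschitz by (rule lipschitz_on_nonneg)
    \<comment> \<open>On [t, t + h] Lipschitz continuity keeps |d| above e/2 once |d t| \<ge> e.\<close>
    define h where "h = e / (2 * (L + 1))"
    have "0 < h" "L * h \<le> e / 2"
      using \<open>0 < e\<close> \<open>0 \<le> L\<close> by (auto simp: h_def field_simps)
    show ?thesis
    proof (rule eventually_less_if_recurrent_drop[OF antimono bounded])
      fix t assume t: "t0 \<le> t" "e \<le> \<bar>d t\<bar>"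
      obtain \<xi> where \<xi>: "\<xi> \<in> {t..t + h}" "V (t + h) - V t = V' \<xi> * h"
        using mvt_atLeast[OF V', of t "t + h"] t \<open>0 < h\<close> by auto
      have "\<bar>d \<xi> - d t\<bar> \<le> L * h"
        using lipschitz_onD[OF lipschitz, of \<xi> t] \<xi>(1) t(1) \<open>0 \<le> L\<close>
          mult_left_mono[of "\<xi> - t" h L]
        by (auto simp: dist_real_def)
      then have "e / 2 \<le> \<bar>d \<xi>\<bar>"
        using \<open>L * h \<le> e / 2\<close> t(2) by linarith
      then have "(e / 2)\<^sup>2 \<le> (d \<xi>)\<^sup>2"
        using \<open>0 < e\<close> by (metis abs_le_square_iff abs_of_pos half_gt_zero)
      then have "\<eta> * (e / 2)\<^sup>2 \<le> \<eta> * (d \<xi>)\<^sup>2"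
        using \<open>0 < \<eta>\<close> by (intro mult_left_mono) auto
      then have "V' \<xi> \<le> - (\<eta> * (e / 2)\<^sup>2)"
        using dissipation[of \<xi>] \<xi>(1) t(1) by auto
      then show "V (t + h) \<le> V t - \<eta> * (e / 2)\<^sup>2 * h"
        using \<xi>(2) \<open>0 < h\<close> mult_right_mono[of "V' \<xi>" "- (\<eta> * (e / 2)\<^sup>2)" h] by auto
    qed (use \<open>0 < \<eta>\<close> \<open>0 < e\<close> \<open>0 < h\<close> in auto)
  qed
  then show ?thesis
    by (simp add: tendsto_iff dist_real_def)
qed

section \<open>Bounds on the control terms\<close>

lemma kappa2_factor:
  fixes v t :: "'a::euclidean_space"
  assumes "0 < \<epsilon>" "\<epsilon> \<le> 1"
  obtains \<phi> \<mu> where "kappa2 \<epsilon> v t = \<phi> * \<mu>" "0 \<le> \<phi>" "\<phi> \<le> 1" "0 \<le> \<mu>" "\<mu> \<le> 1"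
    and "- (1 - \<epsilon>) * (norm v)\<^sup>2 \<le> \<mu> * (v \<bullet> t)"
proof -
  define \<phi> where "\<phi> = min ((norm v)\<^sup>2 / \<epsilon>) 1"
  define \<mu> where "\<mu> = (if 0 \<le> v \<bullet> t then 1 else min (- (1 - \<epsilon>) * (norm v)\<^sup>2 / (v \<bullet> t)) 1)"
  have "- (1 - \<epsilon>) * (norm v)\<^sup>2 \<le> \<mu> * (v \<bullet> t)"
  proof (cases "0 \<le> v \<bullet> t")
    case True
    moreover have "- (1 - \<epsilon>) * (norm v)\<^sup>2 \<le> 0"
      using assms by (simp add: mult_nonpos_nonneg)
    ultimately show ?thesis
      by (simp add: \<mu>_def)
  next
    case False
    then have "(- (1 - \<epsilon>) * (norm v)\<^sup>2 / (v \<bullet> t)) * (v \<bullet> t) \<le> \<mu> * (v \<bullet> t)"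
      by (intro mult_right_mono_neg) (auto simp: \<mu>_def)
    with False show ?thesis
      by simp
  qed
  moreover have "kappa2 \<epsilon> v t = \<phi> * \<mu>"
    by (simp add: kappa2_def Let_def \<phi>_def \<mu>_def)
  moreover have "0 \<le> \<phi>" "\<phi> \<le> 1" "0 \<le> \<mu>" "\<mu> \<le> 1"
    using assms by (auto simp: \<phi>_def \<mu>_def intro!: divide_nonpos_neg mult_nonpos_nonneg)
  ultimately show ?thesis
    using that by blast
qed

lemma kappa2_nonneg:
  assumes "0 < \<epsilon>" "\<epsilon> \<le> 1"
  shows "0 \<le> kappa2 \<epsilon> v t"
  by (rule kappa2_factor[OF assms, of v t]) simp

lemma kappa2_le_one:
  assumes "0 < \<epsilon>" "\<epsilon> \<le> 1"
  shows "kappa2 \<epsilon> v t \<le> 1"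
  by (rule kappa2_factor[OF assms, of v t]) (simp add: mult_le_one)

lemma inner_add_kappa2_ge:
  fixes v t :: "'a::euclidean_space"
  assumes "0 < \<epsilon>" "\<epsilon> \<le> 1"
  shows "\<epsilon> * (norm v)\<^sup>2 \<le> v \<bullet> (v + kappa2 \<epsilon> v t *\<^sub>R t)"
proof -
  obtain \<phi> \<mu> where \<kappa>: "kappa2 \<epsilon> v t = \<phi> * \<mu>" and \<phi>: "0 \<le> \<phi>" "\<phi> \<le> 1"
    and \<mu>_inner: "- (1 - \<epsilon>) * (norm v)\<^sup>2 \<le> \<mu> * (v \<bullet> t)"
    using kappa2_factor[OF assms] by metis
  have "- (1 - \<epsilon>) * (norm v)\<^sup>2 \<le> kappa2 \<epsilon> v t * (v \<bullet> t)"
  proof (cases "0 \<le> \<mu> * (v \<bullet> t)")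
    case True
    then have "0 \<le> kappa2 \<epsilon> v t * (v \<bullet> t)"
      using \<kappa> mult_nonneg_nonneg[OF \<phi>(1) True] by (simp add: mult.assoc)
    moreover have "- (1 - \<epsilon>) * (norm v)\<^sup>2 \<le> 0"
      using assms by (simp add: mult_nonpos_nonneg)
    ultimately show ?thesis
      by linarith
  next
    case False
    then have "\<mu> * (v \<bullet> t) \<le> \<phi> * (\<mu> * (v \<bullet> t))"
      using \<phi> mult_right_mono_neg[of \<phi> 1 "\<mu> * (v \<bullet> t)"] by simp
    with \<mu>_inner \<kappa> show ?thesis
      by simp
  qed
  then show ?thesis
    by (simp add: power2_norm_eq_inner algebra_simps)
qed

lemma sat_eq_scaleR:
  assumes "0 < vmax"
  shows "sat vmax z = (vmax / max (norm z) vmax) *\<^sub>R z"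
  using assms by (simp add: sat_def max_def)

lemma norm_sat_le:
  assumes "0 < vmax"
  shows "norm (sat vmax z) \<le> vmax"
  using assms by (simp add: sat_eq_scaleR divide_le_eq max_def)

lemma norm_v_cv_tilde_le:
  fixes p :: "nat \<Rightarrow> 'a::euclidean_space"
  assumes "0 < \<sigma>2" "0 < \<epsilon>" "0 < r"
  shows "norm (v_cv_tilde \<sigma>2 \<epsilon> r n p i) \<le> \<sigma>2 * (real n * (r\<^sup>2 / \<epsilon>))"
proof -
  define J where "J = {j. j < n \<and> j \<noteq> i \<and> norm (p i - p j) \<le> r}"
  define w where "w j = ((r - norm (p i - p j)) / (norm (p i - p j) + \<epsilon>)) *\<^sub>R (p i - p j)" for j
  have w_le: "norm (w j) \<le> r\<^sup>2 / \<epsilon>" if "j \<in> J" for j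
  proof -
    define d where "d = norm (p i - p j)"
    have d: "0 \<le> d" "d \<le> r"
      using that by (auto simp: J_def d_def)
    have "(r - d) / (d + \<epsilon>) \<le> r / \<epsilon>"
      using d assms by (intro frac_le) auto
    then have "(r - d) / (d + \<epsilon>) * d \<le> r / \<epsilon> * r"
      using d assms by (intro mult_mono) auto
    then show ?thesis
      using d assms by (simp add: w_def d_def power2_eq_square)
  qed
  have "card J \<le> n"
    using card_mono[of "{..<n}" J] by (auto simp: J_def)
  have "norm (\<Sum>j\<in>J. w j) \<le> real (card J) * (r\<^sup>2 / \<epsilon>)"
    using norm_sum sum_mono[OF w_le] by (fastforce intro: order_trans)
  also have "\<dots> \<le> real n * (r\<^sup>2 / \<epsilon>)"
    using \<open>card J \<le> n\<close> assms by (intro mult_right_mono) auto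
  finally have "\<sigma>2 * norm (\<Sum>j\<in>J. w j) \<le> \<sigma>2 * (real n * (r\<^sup>2 / \<epsilon>))"
    using assms by (intro mult_left_mono) auto
  moreover have "v_cv_tilde \<sigma>2 \<epsilon> r n p i = \<sigma>2 *\<^sub>R (\<Sum>j\<in>J. w j)"
    by (simp add: v_cv_tilde_def J_def w_def)
  ultimately show ?thesis
    using assms by simp
qed

lemma norm_v_cv_le:
  fixes q p :: "nat \<Rightarrow> 'a::euclidean_space"
  assumes "0 < \<sigma>2" "0 < \<epsilon>" "\<epsilon> \<le> 1" "0 < r"
  shows "norm (v_cv \<beta> \<sigma>1 \<sigma>2 \<epsilon> r n m q p i) \<le> \<sigma>2 * (real n * (r\<^sup>2 / \<epsilon>))"
proof -
  let ?t = "v_cv_tilde \<sigma>2 \<epsilon> r n p i"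
  let ?\<kappa> = "kappa2 \<epsilon> (v_ms \<beta> \<sigma>1 n m q p i) ?t"
  have "norm (v_cv \<beta> \<sigma>1 \<sigma>2 \<epsilon> r n m q p i) = ?\<kappa> * norm ?t"
    by (simp add: v_cv_def kappa2_nonneg[OF assms(2,3)])
  also have "\<dots> \<le> norm ?t"
    using kappa2_nonneg[OF assms(2,3)] kappa2_le_one[OF assms(2,3)]
    by (intro mult_left_le_one_le) auto
  also have "\<dots> \<le> \<sigma>2 * (real n * (r\<^sup>2 / \<epsilon>))"
    using norm_v_cv_tilde_le assms by blast
  finally show ?thesis .
qed

lemma mass_pos: "1 \<le> n \<Longrightarrow> 0 < mass \<beta> n p y"
  unfolding mass_def by (intro mult_pos_pos sum_pos) (auto simp: lessThan_empty_iff)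

lemma mass_le_one:
  assumes "0 \<le> \<beta>"
  shows "mass \<beta> n p y \<le> 1"
proof -
  have "(\<Sum>i<n. exp (- \<beta> * (norm (y - p i))\<^sup>2)) \<le> (\<Sum>i<n. 1)"
    using assms by (intro sum_mono) simp
  then show ?thesis
    by (cases "n = 0") (auto simp: mass_def divide_le_eq)
qed

lemma affine_le_quadratic:
  fixes Q a B c \<rho> :: real
  assumes "0 \<le> Q" "0 \<le> a" "0 \<le> B" "0 < c" "1 + Q * (a + B) / c \<le> \<rho>"
  shows "Q * (a * \<rho> + B) \<le> c * \<rho>\<^sup>2"
proof -
  have "0 \<le> Q * (a + B) / c"
    using assms by simp
  then have "1 \<le> \<rho>" "Q * (a + B) / c \<le> \<rho>"
    using assms(5) by linarith+
  then have "Q * (a + B) \<le> c * \<rho>"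
    using \<open>0 < c\<close> by (simp add: pos_divide_le_eq mult.commute)
  have "Q * B \<le> Q * B * \<rho>"
    using mult_left_mono[of 1 \<rho> "Q * B"] \<open>1 \<le> \<rho>\<close> assms by simp
  moreover have "Q * (a + B) * \<rho> \<le> c * \<rho> * \<rho>"
    using \<open>Q * (a + B) \<le> c * \<rho>\<close> \<open>1 \<le> \<rho>\<close> by (intro mult_right_mono) auto
  ultimately show ?thesis
    by (simp add: power2_eq_square algebra_simps)
qed

section \<open>The closed loop\<close>

locale shape_controller =
  fixes \<beta> \<sigma>1 \<sigma>2 \<epsilon> r_avoid vmax :: real
    and n m :: nat
    and q :: "nat \<Rightarrow> 'a::euclidean_space"
    and S :: "'a set"
  assumes n_ge_1: "1 \<le> n" and m_ge_1: "1 \<le> m"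
    and \<beta>_pos: "0 < \<beta>" and \<sigma>1_pos: "0 < \<sigma>1" and \<sigma>2_pos: "0 < \<sigma>2"
    and \<epsilon>_pos: "0 < \<epsilon>" and \<epsilon>_le_one: "\<epsilon> \<le> 1"
    and r_avoid_pos: "0 < r_avoid" and vmax_pos: "0 < vmax"
    and convex_S: "convex S" and samples_in_S: "\<And>k. k < m \<Longrightarrow> q k \<in> S"
begin

abbreviation command :: "(nat \<Rightarrow> 'a) \<Rightarrow> nat \<Rightarrow> 'a" where
  "command p i \<equiv> v_ms \<beta> \<sigma>1 n m q p i + v_cv \<beta> \<sigma>1 \<sigma>2 \<epsilon> r_avoid n m q p i"

abbreviation velocity :: "(nat \<Rightarrow> 'a) \<Rightarrow> nat \<Rightarrow> 'a" where
  "velocity p i \<equiv> closed_loop \<beta> \<sigma>1 \<sigma>2 \<epsilon> r_avoid vmax n m q p i"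

definition weight :: "(nat \<Rightarrow> 'a) \<Rightarrow> nat \<Rightarrow> nat \<Rightarrow> real" where
  "weight p i k = inverse (mass \<beta> n p (q k)) * exp (- \<beta> * (norm (q k - p i))\<^sup>2)"

definition total_weight :: "(nat \<Rightarrow> 'a) \<Rightarrow> nat \<Rightarrow> real" where
  "total_weight p i = (\<Sum>k<m. weight p i k)"

definition drift :: "(nat \<Rightarrow> 'a) \<Rightarrow> nat \<Rightarrow> 'a" where
  "drift p i = (\<Sum>k<m. weight p i k *\<^sub>R (q k - p i))"

definition centre :: "(nat \<Rightarrow> 'a) \<Rightarrow> nat \<Rightarrow> 'a" where
  "centre p i = (\<Sum>k<m. (weight p i k / total_weight p i) *\<^sub>R q k)"

definition lyapunov :: "(nat \<Rightarrow> 'a) \<Rightarrow> real" where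
  "lyapunov p = - (\<Sum>k<m. ln (mass \<beta> n p (q k)))"

lemma weight_pos: "0 < weight p i k"
  using mass_pos[OF n_ge_1, of \<beta> p "q k"] by (simp add: weight_def)

lemma exp_le_weight: "exp (- \<beta> * (norm (q k - p i))\<^sup>2) \<le> weight p i k"
proof -
  have "1 \<le> inverse (mass \<beta> n p (q k))"
    using mass_pos[OF n_ge_1, of \<beta> p "q k"] mass_le_one[of \<beta> n p "q k"] \<beta>_pos
    by (simp add: one_le_inverse_iff)
  then show ?thesis
    unfolding weight_def using mult_right_mono[of 1] by fastforce
qed

lemma total_weight_pos: "0 < total_weight p i"
  using m_ge_1 by (auto simp: total_weight_def lessThan_empty_iff intro!: sum_pos weight_pos)

lemma total_weight_ge:
  assumes "norm (p i) \<le> M"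
  shows "exp (- \<beta> * (norm (q 0) + M)\<^sup>2) \<le> total_weight p i"
proof -
  have "(norm (q 0 - p i))\<^sup>2 \<le> (norm (q 0) + M)\<^sup>2"
    using norm_triangle_ineq4[of "q 0" "p i"] assms by (intro power_mono) auto
  then have "exp (- \<beta> * (norm (q 0) + M)\<^sup>2) \<le> exp (- \<beta> * (norm (q 0 - p i))\<^sup>2)"
    using \<beta>_pos by simp
  also have "\<dots> \<le> weight p i 0"
    by (rule exp_le_weight)
  also have "\<dots> \<le> total_weight p i"
    unfolding total_weight_def using m_ge_1
    by (intro member_le_sum) (auto intro: less_imp_le[OF weight_pos])
  finally show ?thesis .
qed

lemma drift_eq_centre: "drift p i = total_weight p i *\<^sub>R (centre p i - p i)"
  using total_weight_pos[of p i]
  by (simp add: drift_def centre_def scaleR_diff_right sum_subtractf scaleR_sum_right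
      scaleR_sum_left[symmetric] total_weight_def)

lemma v_ms_eq_centre: "v_ms \<beta> \<sigma>1 n m q p i = (\<sigma>1 / real m) *\<^sub>R (centre p i - p i)"
proof -
  have "v_ms \<beta> \<sigma>1 n m q p i = (1 / total_weight p i) *\<^sub>R ((\<sigma>1 / real m) *\<^sub>R drift p i)"
    by (simp add: v_ms_def drift_def total_weight_def weight_def)
  then show ?thesis
    using total_weight_pos[of p i] by (simp add: drift_eq_centre)
qed

lemma centre_in_S: "centre p i \<in> S"
  unfolding centre_def
proof (rule convex_sum[OF _ convex_S])
  show "(\<Sum>k<m. weight p i k / total_weight p i) = 1"
    using total_weight_pos[of p i] by (simp add: total_weight_def sum_divide_distrib[symmetric])
qed (auto intro: samples_in_S divide_nonneg_pos less_imp_le[OF weight_pos] total_weight_pos)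

lemma norm_centre_le: "norm (centre p i) \<le> (\<Sum>k<m. norm (q k))"
proof -
  have "norm (centre p i) \<le> (\<Sum>k<m. norm ((weight p i k / total_weight p i) *\<^sub>R q k))"
    unfolding centre_def by (rule norm_sum)
  also have "\<dots> \<le> (\<Sum>k<m. norm (q k))"
  proof (rule sum_mono)
    fix k assume "k \<in> {..<m}"
    then have "weight p i k \<le> total_weight p i"
      unfolding total_weight_def by (intro member_le_sum) (auto intro: less_imp_le[OF weight_pos])
    then have "weight p i k / total_weight p i \<le> 1"
      using total_weight_pos[of p i] by simp
    moreover have "0 \<le> weight p i k / total_weight p i"
      using weight_pos[of p i k] total_weight_pos[of p i] by simp
    ultimately have "weight p i k / total_weight p i * norm (q k) \<le> norm (q k)"
      by (intro mult_left_le_one_le) auto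
    then show "norm ((weight p i k / total_weight p i) *\<^sub>R q k) \<le> norm (q k)"
      using weight_pos[of p i k] total_weight_pos[of p i] by simp
  qed
  finally show ?thesis .
qed

lemma inner_centre_command_ge:
  "\<epsilon> * (\<sigma>1 / real m) * (norm (centre p i - p i))\<^sup>2 \<le> (centre p i - p i) \<bullet> command p i"
proof -
  define a where "a = \<sigma>1 / real m"
  have "0 < a"
    using \<sigma>1_pos m_ge_1 by (simp add: a_def)
  have "\<epsilon> * (norm (v_ms \<beta> \<sigma>1 n m q p i))\<^sup>2 \<le> v_ms \<beta> \<sigma>1 n m q p i \<bullet> command p i"
    using inner_add_kappa2_ge[OF \<epsilon>_pos \<epsilon>_le_one] by (simp add: v_cv_def)
  then have "a * (\<epsilon> * a * (norm (centre p i - p i))\<^sup>2) \<le> a * ((centre p i - p i) \<bullet> command p i)"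
    using \<open>0 < a\<close>
    by (simp add: v_ms_eq_centre a_def[symmetric] power_mult_distrib power2_eq_square mult_ac)
  then have "\<epsilon> * a * (norm (centre p i - p i))\<^sup>2 \<le> (centre p i - p i) \<bullet> command p i"
    using \<open>0 < a\<close> by (simp only: mult_le_cancel_left_pos)
  then show ?thesis
    by (simp add: a_def)
qed

lemma inner_centre_command_ge_infdist:
  "\<epsilon> * (\<sigma>1 / real m) * (infdist (p i) S)\<^sup>2 \<le> (centre p i - p i) \<bullet> command p i"
proof -
  have "infdist (p i) S \<le> norm (centre p i - p i)"
    using infdist_le[OF centre_in_S, of "p i" p i] by (simp add: dist_norm norm_minus_commute)
  then have "(infdist (p i) S)\<^sup>2 \<le> (norm (centre p i - p i))\<^sup>2"
    using infdist_nonneg by (intro power_mono) auto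
  then have "\<epsilon> * (\<sigma>1 / real m) * (infdist (p i) S)\<^sup>2
      \<le> \<epsilon> * (\<sigma>1 / real m) * (norm (centre p i - p i))\<^sup>2"
    using \<epsilon>_pos \<sigma>1_pos by (intro mult_left_mono) auto
  then show ?thesis
    using inner_centre_command_ge[of p i] by (rule order_trans)
qed

lemma norm_command_le:
  "norm (command p i) \<le> \<sigma>1 / real m * norm (centre p i - p i) + \<sigma>2 * (real n * (r_avoid\<^sup>2 / \<epsilon>))"
  using norm_triangle_ineq[of "v_ms \<beta> \<sigma>1 n m q p i" "v_cv \<beta> \<sigma>1 \<sigma>2 \<epsilon> r_avoid n m q p i"]
    norm_v_cv_le[OF \<sigma>2_pos \<epsilon>_pos \<epsilon>_le_one r_avoid_pos, of \<beta> \<sigma>1 n m q p i] \<sigma>1_pos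
  by (simp add: v_ms_eq_centre)

lemma norm_command_le_if_norm_le:
  assumes "norm (p i) \<le> M"
  shows "norm (command p i)
    \<le> \<sigma>1 / real m * ((\<Sum>k<m. norm (q k)) + M) + \<sigma>2 * (real n * (r_avoid\<^sup>2 / \<epsilon>))"
proof -
  have "norm (centre p i - p i) \<le> (\<Sum>k<m. norm (q k)) + M"
    using norm_triangle_ineq4[of "centre p i" "p i"] norm_centre_le[of p i] assms by simp
  then have "\<sigma>1 / real m * norm (centre p i - p i) \<le> \<sigma>1 / real m * ((\<Sum>k<m. norm (q k)) + M)"
    using \<sigma>1_pos by (intro mult_left_mono) auto
  then show ?thesis
    using norm_command_le[of p i] by linarith
qed

lemma velocity_eq: "velocity p i = (vmax / max (norm (command p i)) vmax) *\<^sub>R command p i"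
  by (simp add: closed_loop_def sat_eq_scaleR[OF vmax_pos])

lemma norm_velocity_le: "norm (velocity p i) \<le> vmax"
  by (simp add: closed_loop_def norm_sat_le[OF vmax_pos])

lemma drift_inner_velocity:
  "drift p i \<bullet> velocity p i
     = total_weight p i * (vmax / max (norm (command p i)) vmax) * ((centre p i - p i) \<bullet> command p i)"
  by (simp add: velocity_eq drift_eq_centre)

lemma drift_inner_velocity_nonneg: "0 \<le> drift p i \<bullet> velocity p i"
proof -
  have "0 \<le> \<epsilon> * (\<sigma>1 / real m) * (norm (centre p i - p i))\<^sup>2"
    using \<epsilon>_pos \<sigma>1_pos by simp
  then have "0 \<le> (centre p i - p i) \<bullet> command p i"
    using inner_centre_command_ge[of p i] by linarith
  then show ?thesis
    using total_weight_pos[of p i] vmax_pos by (simp add: drift_inner_velocity)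
qed

lemma drift_inner_velocity_ge:
  "\<exists>\<eta>>0. \<forall>p. norm (p i) \<le> M \<longrightarrow> \<eta> * (infdist (p i) S)\<^sup>2 \<le> drift p i \<bullet> velocity p i"
proof -
  define K where "K = \<sigma>1 / real m * ((\<Sum>k<m. norm (q k)) + M) + \<sigma>2 * (real n * (r_avoid\<^sup>2 / \<epsilon>))"
  define w0 where "w0 = exp (- \<beta> * (norm (q 0) + M)\<^sup>2)"
  have "w0 * (vmax / max K vmax) * (\<epsilon> * (\<sigma>1 / real m) * (infdist (p i) S)\<^sup>2)
      \<le> drift p i \<bullet> velocity p i" if "norm (p i) \<le> M" for p
  proof -
    have "vmax / max K vmax \<le> vmax / max (norm (command p i)) vmax"
      using norm_command_le_if_norm_le[of p i M, OF that] vmax_pos by (intro divide_left_mono) (auto simp: K_def)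
    then have "w0 * (vmax / max K vmax) \<le> total_weight p i * (vmax / max (norm (command p i)) vmax)"
      using total_weight_ge[of p i M, OF that] total_weight_pos[of p i] vmax_pos
      by (intro mult_mono) (auto simp: w0_def)
    then have "w0 * (vmax / max K vmax) * (\<epsilon> * (\<sigma>1 / real m) * (infdist (p i) S)\<^sup>2)
        \<le> total_weight p i * (vmax / max (norm (command p i)) vmax) * ((centre p i - p i) \<bullet> command p i)"
      by (rule mult_mono)
        (use inner_centre_command_ge_infdist vmax_pos total_weight_pos[of p i] \<epsilon>_pos \<sigma>1_pos in auto)
    then show ?thesis
      by (simp add: drift_inner_velocity)
  qed
  moreover have "0 < w0 * (vmax / max K vmax) * (\<epsilon> * (\<sigma>1 / real m))"
    using vmax_pos \<epsilon>_pos \<sigma>1_pos m_ge_1 by (simp add: w0_def)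
  ultimately show ?thesis
    by (metis mult.assoc)
qed

lemma exists_inner_velocity_nonpos: "\<exists>R. \<forall>p. R < norm (p i) \<longrightarrow> p i \<bullet> velocity p i \<le> 0"
proof -
  define a where "a = \<sigma>1 / real m"
  define Q where "Q = (\<Sum>k<m. norm (q k))"
  define B where "B = \<sigma>2 * (real n * (r_avoid\<^sup>2 / \<epsilon>))"
  have "0 < a" "0 \<le> Q" "0 \<le> B"
    using \<sigma>1_pos m_ge_1 \<sigma>2_pos \<epsilon>_pos by (auto simp: a_def Q_def B_def sum_nonneg)
  have "p i \<bullet> velocity p i \<le> 0" if "Q + 1 + Q * (a + B) / (\<epsilon> * a) < norm (p i)" for p
  proof -
    define y where "y = centre p i - p i"
    have "norm (p i) - Q \<le> norm y"
      using norm_triangle_ineq2[of "p i" "centre p i"] norm_centre_le[of p i]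
      by (simp add: y_def Q_def norm_minus_commute)
    then have "Q * (a * norm y + B) \<le> \<epsilon> * a * (norm y)\<^sup>2"
      using that \<open>0 < a\<close> \<open>0 \<le> Q\<close> \<open>0 \<le> B\<close> \<epsilon>_pos by (intro affine_le_quadratic) auto
    moreover have "centre p i \<bullet> command p i \<le> Q * (a * norm y + B)"
    proof -
      have "centre p i \<bullet> command p i \<le> norm (centre p i) * norm (command p i)"
        by (rule norm_cauchy_schwarz)
      also have "\<dots> \<le> Q * (a * norm y + B)"
        using norm_centre_le[of p i] norm_command_le[of p i] \<open>0 \<le> Q\<close>
        by (intro mult_mono) (auto simp: Q_def a_def B_def y_def)
      finally show ?thesis .
    qed
    moreover have "\<epsilon> * a * (norm y)\<^sup>2 \<le> y \<bullet> command p i"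
      using inner_centre_command_ge[of p i] unfolding a_def y_def .
    ultimately have "p i \<bullet> command p i \<le> 0"
      by (simp add: y_def inner_diff_left)
    then show ?thesis
      using vmax_pos by (simp add: velocity_eq mult_nonneg_nonpos divide_nonpos_pos less_max_iff_disj)
  qed
  then show ?thesis
    by blast
qed

lemma lyapunov_nonneg: "0 \<le> lyapunov p"
proof -
  have "ln (mass \<beta> n p (q k)) \<le> 0" for k
    using mass_pos[OF n_ge_1, of \<beta> p "q k"] mass_le_one[of \<beta> n p "q k"] \<beta>_pos by simp
  then show ?thesis
    by (simp add: lyapunov_def sum_nonpos)
qed

lemma lyapunov_has_derivative:
  fixes x :: "real \<Rightarrow> nat \<Rightarrow> 'a"
  assumes x': "\<And>j. j < n \<Longrightarrow> ((\<lambda>s. x s j) has_vector_derivative D j) (at t within T)"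
  shows "((\<lambda>s. lyapunov (x s)) has_real_derivative
      - (2 * \<beta> / real n) * (\<Sum>j<n. drift (x t) j \<bullet> D j)) (at t within T)"
proof -
  define e where "e k j = exp (- \<beta> * (norm (q k - x t j))\<^sup>2)" for k j
  have "((\<lambda>s. exp (- \<beta> * (norm (q k - x s j))\<^sup>2)) has_real_derivative
      2 * \<beta> * e k j * ((q k - x t j) \<bullet> D j)) (at t within T)" if "j \<in> {..<n}" for k j
    using x'[of j] that
    unfolding power2_norm_eq_inner e_def has_vector_derivative_def has_field_derivative_def
    by (auto intro!: derivative_eq_intros simp: algebra_simps inner_commute)
  then have mass_derivative: "((\<lambda>s. mass \<beta> n (x s) (q k)) has_real_derivative
      1 / real n * (\<Sum>j<n. 2 * \<beta> * e k j * ((q k - x t j) \<bullet> D j))) (at t within T)" for k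
    unfolding mass_def by (intro DERIV_cmult DERIV_sum)
  have "((\<lambda>s. ln (mass \<beta> n (x s) (q k))) has_real_derivative
      2 * \<beta> / real n * (\<Sum>j<n. weight (x t) j k * ((q k - x t j) \<bullet> D j))) (at t within T)" for k
    using DERIV_chain2[where g="\<lambda>s. mass \<beta> n (x s) (q k)" and x=t,
        OF DERIV_ln_divide[OF mass_pos[OF n_ge_1]] mass_derivative]
    by (simp add: weight_def e_def sum_distrib_left divide_inverse algebra_simps)
  then have "((\<lambda>s. lyapunov (x s)) has_real_derivative
      - (\<Sum>k<m. 2 * \<beta> / real n * (\<Sum>j<n. weight (x t) j k * ((q k - x t j) \<bullet> D j))))
      (at t within T)"
    unfolding lyapunov_def by (intro DERIV_minus DERIV_sum)
  moreover have "(\<Sum>k<m. 2 * \<beta> / real n * (\<Sum>j<n. weight (x t) j k * ((q k - x t j) \<bullet> D j)))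
      = 2 * \<beta> / real n * (\<Sum>j<n. drift (x t) j \<bullet> D j)"
    by (simp only: sum_distrib_left[symmetric])
      (simp add: drift_def inner_sum_left sum.swap[of _ "{..<m}"])
  ultimately show ?thesis
    by simp
qed

lemma dissipation_ge:
  assumes "i < n"
  shows "\<exists>\<eta>>0. \<forall>p. norm (p i) \<le> M \<longrightarrow>
    \<eta> * (infdist (p i) S)\<^sup>2 \<le> 2 * \<beta> / real n * (\<Sum>j<n. drift p j \<bullet> velocity p j)"
proof -
  obtain \<eta> where "0 < \<eta>"
    and \<eta>: "\<And>p. norm (p i) \<le> M \<Longrightarrow> \<eta> * (infdist (p i) S)\<^sup>2 \<le> drift p i \<bullet> velocity p i"
    using drift_inner_velocity_ge by blast
  have "2 * \<beta> / real n * \<eta> * (infdist (p i) S)\<^sup>2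
      \<le> 2 * \<beta> / real n * (\<Sum>j<n. drift p j \<bullet> velocity p j)" if "norm (p i) \<le> M" for p
  proof -
    have "drift p i \<bullet> velocity p i \<le> (\<Sum>j<n. drift p j \<bullet> velocity p j)"
      using assms drift_inner_velocity_nonneg by (intro member_le_sum) auto
    then have "\<eta> * (infdist (p i) S)\<^sup>2 \<le> (\<Sum>j<n. drift p j \<bullet> velocity p j)"
      using \<eta>[of p, OF that] by linarith
    then have "2 * \<beta> / real n * (\<eta> * (infdist (p i) S)\<^sup>2)
        \<le> 2 * \<beta> / real n * (\<Sum>j<n. drift p j \<bullet> velocity p j)"
      using \<beta>_pos by (intro mult_left_mono) auto
    then show ?thesis
      by (simp add: mult.assoc)
  qed
  moreover have "0 < 2 * \<beta> / real n * \<eta>"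
    using \<beta>_pos n_ge_1 \<open>0 < \<eta>\<close> by simp
  ultimately show ?thesis
    by blast
qed

lemma solution_bounded:
  fixes x :: "real \<Rightarrow> nat \<Rightarrow> 'a"
  assumes solution: "\<And>t. t0 \<le> t \<Longrightarrow>
    ((\<lambda>s. x s i) has_vector_derivative velocity (x t) i) (at t within {t0..})"
  shows "\<exists>M. \<forall>t\<ge>t0. norm (x t i) \<le> M"
proof -
  obtain R where R: "\<And>p. R < norm (p i) \<Longrightarrow> p i \<bullet> velocity p i \<le> 0"
    using exists_inner_velocity_nonpos by blast
  have "norm (x t i) \<le> max (norm (x t0 i)) R" if "t0 \<le> t" for t
  proof (rule norm_le_max_if_inner_derivative_nonpos[where y="\<lambda>s. x s i", OF solution])
    show "x s i \<bullet> velocity (x s) i \<le> 0" if "R < norm (x s i)" for s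
      using R[of "x s"] that by blast
  qed (use that in auto)
  then show ?thesis
    by blast
qed

end

theorem theorem4:
  fixes x :: "real \<Rightarrow> nat \<Rightarrow> 'a::euclidean_space"
    and q :: "nat \<Rightarrow> 'a" and S :: "'a set"
    and n m :: nat and \<beta> \<sigma>1 \<sigma>2 \<epsilon> r_avoid vmax t0 :: real
  assumes "n \<ge> 2" and "m \<ge> 1"
    and "\<beta> > 0" and "\<sigma>1 > 0" and "\<sigma>2 > 0" and "0 < \<epsilon>" and "\<epsilon> < 1"
    and "r_avoid > 0" and "vmax > 0"
    and "closed S" and "convex S" and "\<And>k. k < m \<Longrightarrow> q k \<in> S"
    and sol: "\<And>t i. t \<ge> t0 \<Longrightarrow> i < n \<Longrightarrow>
       ((\<lambda>s. x s i) has_vector_derivative closed_loop \<beta> \<sigma>1 \<sigma>2 \<epsilon> r_avoid vmax n m q (x t) i)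
         (at t within {t0..})"
    and "i < n"
  shows "((\<lambda>t. infdist (x t i) S) \<longlongrightarrow> 0) at_top"
proof -
  interpret shape_controller \<beta> \<sigma>1 \<sigma>2 \<epsilon> r_avoid vmax n m q S
    using assms by unfold_locales auto
  obtain M where bounded: "\<And>t. t0 \<le> t \<Longrightarrow> norm (x t i) \<le> M"
    using solution_bounded[of t0 x i] sol \<open>i < n\<close> by blast
  obtain \<eta> where "0 < \<eta>" and \<eta>: "\<And>p. norm (p i) \<le> M \<Longrightarrow>
      \<eta> * (infdist (p i) S)\<^sup>2 \<le> 2 * \<beta> / real n * (\<Sum>j<n. drift p j \<bullet> velocity p j)"
    using dissipation_ge[OF \<open>i < n\<close>] by blast
  have lyapunov_derivative: "((\<lambda>s. lyapunov (x s)) has_real_derivative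
      - (2 * \<beta> / real n) * (\<Sum>j<n. drift (x t) j \<bullet> velocity (x t) j)) (at t within {t0..})"
    if "t0 \<le> t" for t
    using sol that by (intro lyapunov_has_derivative)
  have lipschitz: "(1 * vmax)-lipschitz_on {t0..} (\<lambda>t. infdist (x t i) S)"
    by (intro lipschitz_on_compose2[OF lipschitz_on_vector_derivative_bound lipschitz_on_infdist])
      (use sol \<open>i < n\<close> norm_velocity_le vmax_pos in auto)
  show ?thesis
  proof (rule tendsto_zero_if_dissipative[OF lyapunov_derivative _ \<open>0 < \<eta>\<close> lyapunov_nonneg lipschitz])
    show "- (2 * \<beta> / real n) * (\<Sum>j<n. drift (x t) j \<bullet> velocity (x t) j) \<le> - \<eta> * (infdist (x t i) S)\<^sup>2"
      if "t0 \<le> t" for t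
      using \<eta>[of "x t"] bounded[OF that] by simp
  qed
qed

end
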